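(* Let $\lambda$ be a nonzero real number and $D=\frac{d}{dx}$. For every integer $n\ge 0$ and every $x$ with $|\lambda x|<1$, $$\mathrm{bel}_{n,\lambda}(x)\,e_{\lambda}(x)=(xD)^{n}e_{\lambda}(x)=\sum_{k=0}^{\infty}\frac{(1)_{k,\lambda}}{k!}k^{n}x^{k}.$$
   Context: For nonzero $\lambda\in\mathbb{R}$, $e_{\lambda}(t)=(1+\lambda t)^{1/\lambda}$, and $(1)_{0,\lambda}=1$, $(1)_{k,\lambda}=1(1-\lambda)\cdots(1-(k-1)\lambda)$ for $k\ge1$, so that $e_\lambda(x)=\sum_{k\ge0}(1)_{k,\lambda}\frac{x^k}{k!}$. The degenerate Bell polynomials of the second kind $\mathrm{bel}_{n,\lambda}(x)$ are defined by $e_{\lambda}(xe^{t})\cdot e_{\lambda}(x)^{-1}=\sum_{n=0}^{\infty}\mathrm{bel}_{n,\lambda}(x)\frac{t^{n}}{n!}$. Here $(xD)^n$ denotes the $n$-fold application of the operator $f\mapsto x f'(x)$. *)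

theory Defs
  imports "HOL-Analysis.Analysis"
begin

definition deg_exp :: "real \<Rightarrow> real \<Rightarrow> real" where
  "deg_exp lam t = (1 + lam * t) powr (1 / lam)"

definition deg_ff :: "real \<Rightarrow> nat \<Rightarrow> real" where
  "deg_ff lam k = (\<Prod>i<k. 1 - real i * lam)"

definition deg_bel :: "real \<Rightarrow> nat \<Rightarrow> real \<Rightarrow> real" where
  "deg_bel lam n x = (THE c :: nat \<Rightarrow> real. \<exists>r>0. \<forall>t. \<bar>t\<bar> < r \<longrightarrow>
      ((\<lambda>m. c m * t ^ m / fact m) sums (deg_exp lam (x * exp t) / deg_exp lam x))) n"

definition xD :: "(real \<Rightarrow> real) \<Rightarrow> real \<Rightarrow> real" where
  "xD f = (\<lambda>y. y * deriv f y)"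

end

theory Submission
  imports Defs
begin

text \<open>By the generalised binomial series, \<open>e\<^sub>\<lambda>(x) = \<Sum>\<^sub>k (1)\<^sub>k\<^sub>,\<^sub>\<lambda> x\<^sup>k / k!\<close> for
  \<open>|\<lambda>x| < 1\<close>, and \<open>xD\<close> multiplies the \<open>k\<close>-th coefficient of a power series by \<open>k\<close>; this
  gives the series for \<open>(xD)\<^sup>n e\<^sub>\<lambda>(x)\<close>. Substituting \<open>x e\<^sup>t\<close>, expanding
  \<open>e\<^sup>k\<^sup>t\<close> and exchanging the absolutely convergent double sum yields
  \<open>e\<^sub>\<lambda>(x e\<^sup>t) = \<Sum>\<^sub>n (xD)\<^sup>n e\<^sub>\<lambda>(x) t\<^sup>n / n!\<close>, so uniqueness of power series
  coefficients identifies \<open>bel\<^sub>n\<^sub>,\<^sub>\<lambda>(x) e\<^sub>\<lambda>(x)\<close> with \<open>(xD)\<^sup>n e\<^sub>\<lambda>(x)\<close>.\<close>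

lemma powser_coeffs_zero:
  fixes a :: "nat \<Rightarrow> 'a::{real_normed_field,banach}"
  assumes "r > 0" and sums0: "\<And>t. norm t < r \<Longrightarrow> (\<lambda>m. a m * t^m) sums 0"
  shows "a k = 0"
proof (induction k rule: less_induct)
  case (less k)
  have "(\<lambda>m. a (m + k) * t^m) sums 0" if "t \<noteq> 0" "norm t < r" for t
  proof -
    have "(\<lambda>m. a (m + k) * t^(m + k)) sums (0 - (\<Sum>m<k. a m * t^m))"
      using sums_split_initial_segment[OF sums0[of t], of k] that by simp
    also have "(\<Sum>m<k. a m * t^m) = 0"
      using less by simp
    finally have "(\<lambda>m. a (m + k) * t^(m + k) / t^k) sums (0 / t^k)"
      by (intro sums_divide) simp
    then show ?thesis
      using that by (simp add: power_add)
  qed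
  then have "((\<lambda>_. 0) \<longlongrightarrow> a k) (at (0 :: 'a))"
    using powser_limit_0_strong[OF \<open>r > 0\<close>, where a = "\<lambda>m. a (m + k)" and f = "\<lambda>_. 0"] by simp
  then show ?case
    by (simp add: tendsto_const_iff)
qed

lemma has_sum_exp: "((\<lambda>m. s^m / fact m) has_sum exp s) UNIV"
  for s :: real
proof (rule norm_summable_imp_has_sum)
  show "summable (\<lambda>m. norm (s^m / fact m))"
    using summable_norm_exp[of s] by (simp add: divide_inverse mult.commute)
  show "(\<lambda>m. s^m / fact m) sums exp s"
    using exp_converges[of s] by (simp add: divide_inverse mult.commute)
qed

lemma powser_abs_summable_inside:
  fixes c :: "nat \<Rightarrow> real"
  assumes "\<And>z. \<bar>z\<bar> < K \<Longrightarrow> summable (\<lambda>k. c k * z^k)" and "\<bar>y\<bar> < K"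
  shows "summable (\<lambda>k. \<bar>c k * y^k\<bar>)"
proof -
  define z where "z = (\<bar>y\<bar> + K) / 2"
  have "\<bar>y\<bar> < \<bar>z\<bar>" "\<bar>z\<bar> < K"
    using assms(2) by (auto simp: z_def)
  then show ?thesis
    using powser_insidea[OF assms(1)] by simp
qed

lemma xD_powser:
  fixes a :: "nat \<Rightarrow> real"
  assumes sums_f: "\<And>z. \<bar>z\<bar> < K \<Longrightarrow> (\<lambda>k. a k * z^k) sums f z" and y: "\<bar>y\<bar> < K"
  shows "(\<lambda>k. a k * real k * y^k) sums xD f y"
proof -
  have summable: "summable (\<lambda>k. a k * z^k)" if "\<bar>z\<bar> < K" for z
    using sums_f[OF that] by (rule sums_summable)
  have summable_diffs: "summable (\<lambda>k. diffs a k * y^k)"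
    by (rule termdiff_converges[where K = K]) (use y summable in auto)
  have "((\<lambda>z. \<Sum>k. a k * z^k) has_field_derivative (\<Sum>k. diffs a k * y^k)) (at y)"
    by (rule termdiffs_strong'[where K = K]) (use y summable in auto)
  then have "(f has_field_derivative (\<Sum>k. diffs a k * y^k)) (at y)"
    by (rule has_field_derivative_transform_within_open[where S = "ball 0 K"])
       (use y sums_f in \<open>auto simp: sums_iff\<close>)
  then have deriv_f: "deriv f y = (\<Sum>k. diffs a k * y^k)"
    by (rule DERIV_imp_deriv)
  have "(\<lambda>k. diffs a k * y^k * y) sums (deriv f y * y)"
    unfolding deriv_f by (rule sums_mult2[OF summable_sums[OF summable_diffs]])
  then have "(\<lambda>k. a (Suc k) * real (Suc k) * y^Suc k) sums (deriv f y * y)"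
    by (simp add: diffs_def mult_ac)
  then have "(\<lambda>k. a k * real k * y^k) sums (deriv f y * y + a 0 * real 0 * y^0)"
    by (rule sums_Suc_iff[where f = "\<lambda>k. a k * real k * y^k", THEN iffD1])
  then show ?thesis
    by (simp add: xD_def mult.commute)
qed

lemma xD_iter_powser:
  fixes c :: "nat \<Rightarrow> real"
  assumes "\<And>z. \<bar>z\<bar> < K \<Longrightarrow> (\<lambda>k. c k * z^k) sums f z" and "\<bar>y\<bar> < K"
  shows "(\<lambda>k. c k * real k ^ n * y^k) sums (xD ^^ n) f y"
  using assms(2)
proof (induction n arbitrary: y)
  case 0
  then show ?case
    using assms(1) by simp
next
  case (Suc n)
  have "(\<lambda>k. c k * real k ^ n * real k * y^k) sums xD ((xD ^^ n) f) y"
    by (rule xD_powser[where K = K]) (use Suc in auto)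
  then show ?case
    by (simp add: mult_ac)
qed

lemma powser_at_mult_exp_sums:
  fixes c :: "nat \<Rightarrow> real"
  assumes summable: "\<And>z. \<bar>z\<bar> < K \<Longrightarrow> summable (\<lambda>k. c k * z^k)"
    and xt: "\<bar>x\<bar> * exp \<bar>t\<bar> < K"
  shows "(\<lambda>m. t^m / fact m * (\<Sum>k. c k * real k ^ m * x^k)) sums (\<Sum>k. c k * (x * exp t)^k)"
proof -
  \<comment> \<open>summing over \<open>m\<close> first gives \<open>c\<^sub>k (x e\<^sup>t)\<^sup>k\<close>, over \<open>k\<close> first the left-hand side\<close>
  define f where "f = (\<lambda>(k, m). c k * x^k * (real k * t)^m / fact m)"
  have "\<bar>x\<bar> \<le> \<bar>x\<bar> * exp \<bar>t\<bar>"
    by (simp add: mult_le_cancel_left1)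
  then have x: "\<bar>x\<bar> < K"
    using xt by linarith
  have row_sum: "((\<lambda>m. f (k, m)) has_sum c k * (x * exp t)^k) UNIV" for k
    using has_sum_cmult_right[OF has_sum_exp[of "real k * t", unfolded exp_of_nat_mult], of "c k * x^k"]
    by (simp add: f_def power_mult_distrib mult_ac)
  have row_abs_sum: "((\<lambda>m. norm (f (k, m))) has_sum \<bar>c k * (\<bar>x\<bar> * exp \<bar>t\<bar>)^k\<bar>) UNIV" for k
    using has_sum_cmult_right[OF has_sum_exp[of "real k * \<bar>t\<bar>", unfolded exp_of_nat_mult], of "\<bar>c k * x^k\<bar>"]
    by (simp add: f_def abs_mult power_abs power_mult_distrib mult_ac)
  have col_sum: "((\<lambda>k. f (k, m)) has_sum t^m / fact m * (\<Sum>k. c k * real k ^ m * x^k)) UNIV" for m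
  proof -
    have sums_m: "(\<lambda>k. c k * real k ^ m * z^k) sums (xD ^^ m) (\<lambda>z. \<Sum>k. c k * z^k) z"
      if "\<bar>z\<bar> < K" for z
      by (rule xD_iter_powser[where K = K]) (use summable that in \<open>auto intro: summable_sums\<close>)
    have "((\<lambda>k. c k * real k ^ m * x^k) has_sum (\<Sum>k. c k * real k ^ m * x^k)) UNIV"
    proof (rule norm_summable_imp_has_sum)
      show "summable (\<lambda>k. norm (c k * real k ^ m * x^k))"
        using powser_abs_summable_inside[of K "\<lambda>k. c k * real k ^ m", OF _ x] sums_m
        by (auto dest: sums_summable)
      show "(\<lambda>k. c k * real k ^ m * x^k) sums (\<Sum>k. c k * real k ^ m * x^k)"
        using sums_m[OF x] by (simp add: sums_iff)
    qed
    from has_sum_cmult_right[OF this, of "t^m / fact m"] show ?thesis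
      by (simp add: f_def power_mult_distrib mult_ac)
  qed
  have "(\<lambda>p. norm (f p)) summable_on Sigma UNIV (\<lambda>_. UNIV)"
  proof (subst Infinite_Sum.abs_summable_on_Sigma_iff, intro conjI ballI)
    show "(\<lambda>m. norm (f (k, m))) summable_on UNIV" for k
      using row_abs_sum by (auto simp: summable_on_def)
    have "summable (\<lambda>k. \<bar>c k * (\<bar>x\<bar> * exp \<bar>t\<bar>)^k\<bar>)"
      by (rule powser_abs_summable_inside[OF summable]) (use xt in auto)
    moreover have "infsum (\<lambda>m. norm (f (k, m))) UNIV = \<bar>c k * (\<bar>x\<bar> * exp \<bar>t\<bar>)^k\<bar>" for k
      using row_abs_sum by (rule infsumI)
    ultimately show "(\<lambda>k. norm (infsum (\<lambda>m. norm (f (k, m))) UNIV)) summable_on UNIV"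
      by (simp add: summable_on_UNIV_nonneg_real_iff)
  qed
  then have "f summable_on UNIV \<times> UNIV"
    by (rule Infinite_Sum.abs_summable_summable)
  then obtain S where S: "(f has_sum S) (UNIV \<times> UNIV)"
    by (auto simp: summable_on_def)
  have "((\<lambda>k. c k * (x * exp t)^k) has_sum S) UNIV"
    using has_sum_SigmaD[OF S row_sum] by simp
  then have S_eq: "S = (\<Sum>k. c k * (x * exp t)^k)"
    by (simp add: has_sum_imp_sums sums_unique)
  have "((\<lambda>(m, k). f (k, m)) has_sum S) (UNIV \<times> UNIV)"
    using S by (subst (asm) has_sum_swap)
  then have "((\<lambda>m. t^m / fact m * (\<Sum>k. c k * real k ^ m * x^k)) has_sum S) UNIV"
    by (rule has_sum_SigmaD) (use col_sum in simp)
  then show ?thesis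
    unfolding S_eq by (rule has_sum_imp_sums)
qed

lemma deg_ff_div_fact_eq_gbinomial:
  assumes "lam \<noteq> 0"
  shows "deg_ff lam k / fact k = ((1 / lam) gchoose k) * lam^k"
proof -
  have "((1 / lam) gchoose k) * lam^k = (\<Prod>i<k. 1 / lam - real i) / fact k * (\<Prod>i<k. lam)"
    by (simp add: gbinomial_prod_rev atLeast0LessThan)
  also have "\<dots> = (\<Prod>i<k. (1 / lam - real i) * lam) / fact k"
    by (simp add: prod.distrib)
  also have "\<dots> = deg_ff lam k / fact k"
    using assms by (simp add: deg_ff_def algebra_simps)
  finally show ?thesis ..
qed

lemma deg_exp_sums:
  assumes "lam \<noteq> 0" and "\<bar>y\<bar> < 1 / \<bar>lam\<bar>"
  shows "(\<lambda>k. deg_ff lam k / fact k * y^k) sums deg_exp lam y"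
proof -
  have "\<bar>lam * y\<bar> < 1"
    using assms by (simp add: abs_mult field_simps)
  from gen_binomial_real[OF this, of "1 / lam"] show ?thesis
    by (simp add: deg_exp_def deg_ff_div_fact_eq_gbinomial[OF assms(1)] power_mult_distrib mult_ac)
qed

lemma xD_iter_deg_exp_sums:
  assumes "lam \<noteq> 0" and "\<bar>y\<bar> < 1 / \<bar>lam\<bar>"
  shows "(\<lambda>k. deg_ff lam k / fact k * real k ^ n * y^k) sums (xD ^^ n) (deg_exp lam) y"
  by (rule xD_iter_powser[where c = "\<lambda>k. deg_ff lam k / fact k", OF deg_exp_sums[OF assms(1)] assms(2)])

lemma deg_exp_mult_exp_sums:
  assumes "lam \<noteq> 0" and xt: "\<bar>x\<bar> * exp \<bar>t\<bar> < 1 / \<bar>lam\<bar>"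
  shows "(\<lambda>m. (xD ^^ m) (deg_exp lam) x * t^m / fact m) sums deg_exp lam (x * exp t)"
proof -
  have "\<bar>x\<bar> \<le> \<bar>x\<bar> * exp \<bar>t\<bar>" and "\<bar>x * exp t\<bar> \<le> \<bar>x\<bar> * exp \<bar>t\<bar>"
    by (simp_all add: mult_le_cancel_left1 abs_mult mult_left_mono)
  then have "\<bar>x\<bar> < 1 / \<bar>lam\<bar>" and "\<bar>x * exp t\<bar> < 1 / \<bar>lam\<bar>"
    using xt by linarith+
  then show ?thesis
    using powser_at_mult_exp_sums[where c = "\<lambda>k. deg_ff lam k / fact k", OF _ xt]
      deg_exp_sums[OF assms(1)] xD_iter_deg_exp_sums[OF assms(1)]
    by (simp add: sums_iff mult_ac)
qed

lemma deg_bel_eqI: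
  assumes "r > 0"
    and "\<And>t. \<bar>t\<bar> < r \<Longrightarrow> (\<lambda>m. c m * t^m / fact m) sums (deg_exp lam (x * exp t) / deg_exp lam x)"
  shows "deg_bel lam n x = c n"
proof -
  define P where "P = (\<lambda>c :: nat \<Rightarrow> real. \<exists>r>0. \<forall>t. \<bar>t\<bar> < r \<longrightarrow>
      ((\<lambda>m. c m * t^m / fact m) sums (deg_exp lam (x * exp t) / deg_exp lam x)))"
  have "d = c" if "P d" for d
  proof
    fix m
    obtain r' where "r' > 0" and
      d: "\<And>t. \<bar>t\<bar> < r' \<Longrightarrow> (\<lambda>m. d m * t^m / fact m) sums (deg_exp lam (x * exp t) / deg_exp lam x)"
      using \<open>P d\<close> by (auto simp: P_def)
    have "d m / fact m - c m / fact m = 0"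
    proof (rule powser_coeffs_zero[where r = "min r r'"])
      show "min r r' > 0"
        using \<open>r > 0\<close> \<open>r' > 0\<close> by simp
      fix t :: real
      assume "norm t < min r r'"
      then have "(\<lambda>m. d m * t^m / fact m - c m * t^m / fact m) sums 0"
        using sums_diff[OF d assms(2), of t t] by simp
      then show "(\<lambda>m. (d m / fact m - c m / fact m) * t^m) sums 0"
        by (simp add: algebra_simps)
    qed
    then show "d m = c m"
      by simp
  qed
  moreover have "P c"
    using assms by (auto simp: P_def)
  ultimately have "(THE c. P c) = c"
    by blast
  then show ?thesis
    by (simp add: deg_bel_def P_def)
qed

theorem theorem5:
  fixes lam x :: real and n :: nat
  assumes "lam \<noteq> 0" and "\<bar>lam * x\<bar> < 1"
  shows "deg_bel lam n x * deg_exp lam x = (xD ^^ n) (deg_exp lam) x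
    \<and> ((\<lambda>k. deg_ff lam k / fact k * real k ^ n * x ^ k) sums ((xD ^^ n) (deg_exp lam) x))"
proof -
  have x: "\<bar>x\<bar> < 1 / \<bar>lam\<bar>"
    using assms by (simp add: abs_mult field_simps)
  have "\<forall>\<^sub>F t in nhds 0. \<bar>x\<bar> * exp \<bar>t\<bar> < 1 / \<bar>lam\<bar>"
    by (rule order_tendstoD[OF _ x]) (auto intro!: tendsto_eq_intros filterlim_ident)
  then obtain r where "r > 0" and r: "\<And>t. \<bar>t\<bar> < r \<Longrightarrow> \<bar>x\<bar> * exp \<bar>t\<bar> < 1 / \<bar>lam\<bar>"
    by (auto simp: eventually_nhds_metric dist_real_def)
  have "deg_bel lam n x = (xD ^^ n) (deg_exp lam) x / deg_exp lam x"
  proof (rule deg_bel_eqI[OF \<open>r > 0\<close>])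
    fix t :: real
    assume "\<bar>t\<bar> < r"
    from sums_divide[OF deg_exp_mult_exp_sums[OF assms(1) r[OF this]], of "deg_exp lam x"]
    show "(\<lambda>m. (xD ^^ m) (deg_exp lam) x / deg_exp lam x * t^m / fact m) sums
        (deg_exp lam (x * exp t) / deg_exp lam x)"
      by (simp add: mult_ac)
  qed
  moreover have "deg_exp lam x > 0"
    using assms(2) by (simp add: deg_exp_def)
  ultimately show ?thesis
    using xD_iter_deg_exp_sums[OF assms(1) x, of n] by simp
qed

end
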